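(* Let $n\geq 3$ and let $\mathcal H_n$ be the universal homogeneous $K_n$-free graph. Then $\mathcal H_n$ is IY-homogeneous for every $\mathrm{Y}\in\{\mathrm{H},\mathrm{I},\mathrm{A},\mathrm{E},\mathrm{B},\mathrm{M}\}$, and $\mathcal H_n$ is not XY-homogeneous for any $\mathrm{X}\in\{\mathrm{H},\mathrm{M}\}$ and any $\mathrm{Y}\in\{\mathrm{H},\mathrm{I},\mathrm{A},\mathrm{E},\mathrm{B},\mathrm{M}\}$.
   Context: All graphs are undirected and loopless; subgraphs are induced. $\mathcal H_n$ is the Fraïssé limit of the class of finite $K_n$-free graphs; it is the unique countable graph such that for all finite disjoint $A,B\subseteq\mathcal H_n$ with $A$ $K_{n-1}$-free there is a vertex adjacent to every vertex of $A$ and to no vertex of $B$. For $\mathrm{X}\in\{\mathrm{H},\mathrm{M},\mathrm{I}\}$ an X-morphism is a homomorphism, monomorphism (injective homomorphism), or isomorphism onto its image. For $\mathrm{Y}\in\{\mathrm{H},\mathrm{I},\mathrm{A},\mathrm{E},\mathrm{B},\mathrm{M}\}$, a Y-morphism $G\to G$ is, respectively, an endomorphism, a self-embedding, an automorphism, a surjective endomorphism, a bijective endomorphism, or an injective endomorphism. $G$ is XY-homogeneous if every X-morphism between finite induced subgraphs of $G$ is the restriction of a Y-morphism $G\to G$. *)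

theory Defs
  imports Main "HOL-Library.Countable_Set"
begin

definition graph :: "'a set \<Rightarrow> ('a \<Rightarrow> 'a \<Rightarrow> bool) \<Rightarrow> bool" where
  "graph V E \<longleftrightarrow> (\<forall>x y. E x y \<longrightarrow> x \<in> V \<and> y \<in> V) \<and> (\<forall>x y. E x y \<longrightarrow> E y x) \<and> (\<forall>x. \<not> E x x)"

definition is_clique :: "('a \<Rightarrow> 'a \<Rightarrow> bool) \<Rightarrow> 'a set \<Rightarrow> bool" where
  "is_clique E S \<longleftrightarrow> (\<forall>x\<in>S. \<forall>y\<in>S. x \<noteq> y \<longrightarrow> E x y)"

definition K_free :: "nat \<Rightarrow> ('a \<Rightarrow> 'a \<Rightarrow> bool) \<Rightarrow> 'a set \<Rightarrow> bool" where
  "K_free k E S \<longleftrightarrow> \<not> (\<exists>C\<subseteq>S. finite C \<and> card C = k \<and> is_clique E C)"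

text \<open>(V,E) is (a copy of) the universal homogeneous K_n-free graph H_n:
  a countable K_n-free graph with the extension property.\<close>
definition is_Henson :: "nat \<Rightarrow> 'a set \<Rightarrow> ('a \<Rightarrow> 'a \<Rightarrow> bool) \<Rightarrow> bool" where
  "is_Henson n V E \<longleftrightarrow> graph V E \<and> countable V \<and> K_free n E V \<and>
     (\<forall>A B. finite A \<and> finite B \<and> A \<subseteq> V \<and> B \<subseteq> V \<and> A \<inter> B = {} \<and> K_free (n - 1) E A \<longrightarrow>
        (\<exists>v\<in>V. v \<notin> A \<and> v \<notin> B \<and> (\<forall>a\<in>A. E v a) \<and> (\<forall>b\<in>B. \<not> E v b)))"

datatype Xkind = XH | XM | XI
datatype Ykind = YH | YI | YA | YE | YB | YM

definition hom_on :: "('a \<Rightarrow> 'a \<Rightarrow> bool) \<Rightarrow> 'a set \<Rightarrow> ('a \<Rightarrow> 'a) \<Rightarrow> bool" where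
  "hom_on E A f \<longleftrightarrow> (\<forall>x\<in>A. \<forall>y\<in>A. E x y \<longrightarrow> E (f x) (f y))"

definition emb_on :: "('a \<Rightarrow> 'a \<Rightarrow> bool) \<Rightarrow> 'a set \<Rightarrow> ('a \<Rightarrow> 'a) \<Rightarrow> bool" where
  "emb_on E A f \<longleftrightarrow> inj_on f A \<and> (\<forall>x\<in>A. \<forall>y\<in>A. E x y \<longleftrightarrow> E (f x) (f y))"

fun Xmorph :: "Xkind \<Rightarrow> ('a \<Rightarrow> 'a \<Rightarrow> bool) \<Rightarrow> 'a set \<Rightarrow> ('a \<Rightarrow> 'a) \<Rightarrow> bool" where
  "Xmorph XH E A f \<longleftrightarrow> hom_on E A f"
| "Xmorph XM E A f \<longleftrightarrow> hom_on E A f \<and> inj_on f A"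
| "Xmorph XI E A f \<longleftrightarrow> emb_on E A f"

fun Ymorph :: "Ykind \<Rightarrow> 'a set \<Rightarrow> ('a \<Rightarrow> 'a \<Rightarrow> bool) \<Rightarrow> ('a \<Rightarrow> 'a) \<Rightarrow> bool" where
  "Ymorph YH V E g \<longleftrightarrow> g ` V \<subseteq> V \<and> hom_on E V g"
| "Ymorph YI V E g \<longleftrightarrow> g ` V \<subseteq> V \<and> emb_on E V g"
| "Ymorph YA V E g \<longleftrightarrow> bij_betw g V V \<and> emb_on E V g"
| "Ymorph YE V E g \<longleftrightarrow> g ` V = V \<and> hom_on E V g"
| "Ymorph YB V E g \<longleftrightarrow> bij_betw g V V \<and> hom_on E V g"
| "Ymorph YM V E g \<longleftrightarrow> g ` V \<subseteq> V \<and> inj_on g V \<and> hom_on E V g"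

definition XY_homogeneous :: "Xkind \<Rightarrow> Ykind \<Rightarrow> 'a set \<Rightarrow> ('a \<Rightarrow> 'a \<Rightarrow> bool) \<Rightarrow> bool" where
  "XY_homogeneous X Y V E \<longleftrightarrow>
     (\<forall>A f. finite A \<and> A \<subseteq> V \<and> f ` A \<subseteq> V \<and> Xmorph X E A f \<longrightarrow>
        (\<exists>g. Ymorph Y V E g \<and> (\<forall>x\<in>A. g x = f x)))"

end

theory Submission
  imports Defs
begin

text \<open>
  Extension to automorphisms is Cantor's back-and-forth argument. The forth step for a finite
  partial isomorphism \<open>P\<close> and a new vertex \<open>v\<close> asks for a vertex adjacent exactly to the
  \<open>P\<close>-images of the neighbours of \<open>v\<close>; the extension property supplies one, because these
  images span no \<open>K\<^bsub>n - 1\<^esub>\<close> (pulled back, such a clique together with \<open>v\<close> would be a \<open>K\<^sub>n\<close>).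
  The back step is the forth step for the converse.

  For the negative part take non-adjacent \<open>a\<close>, \<open>b\<close> and a neighbour \<open>d\<close> of \<open>a\<close>. The
  monomorphism \<open>a \<mapsto> a, b \<mapsto> d\<close> extends to no endomorphism \<open>g\<close>: the extension property gives
  a clique \<open>C\<close> of \<open>n - 2\<close> common neighbours of \<open>a\<close> and \<open>b\<close>, and \<open>g\<close> maps \<open>{a, b} \<union> C\<close>,
  which misses only the edge \<open>ab\<close>, onto a \<open>K\<^sub>n\<close>.
\<close>

definition partial_iso :: "('a \<Rightarrow> 'a \<Rightarrow> bool) \<Rightarrow> ('a \<times> 'a) set \<Rightarrow> bool" where
  "partial_iso E P \<longleftrightarrow>
     (\<forall>x y x' y'. (x, y) \<in> P \<longrightarrow> (x', y') \<in> P \<longrightarrow> (x = x' \<longleftrightarrow> y = y') \<and> (E x x' \<longleftrightarrow> E y y'))"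

lemma partial_iso_converse: "partial_iso E P \<Longrightarrow> partial_iso E (P\<inverse>)"
  unfolding partial_iso_def by blast

lemma partial_iso_graph_of_emb: "emb_on E A f \<Longrightarrow> partial_iso E ((\<lambda>x. (x, f x)) ` A)"
  unfolding partial_iso_def emb_on_def inj_on_def by auto

lemma partial_iso_insert:
  assumes "graph V E" "partial_iso E P" "v \<notin> Domain P" "w \<notin> Range P"
    and "\<And>x y. (x, y) \<in> P \<Longrightarrow> E v x \<longleftrightarrow> E w y"
  shows "partial_iso E (insert (v, w) P)"
  using assms unfolding partial_iso_def graph_def by (simp, blast)

lemma partial_iso_UN_mono:
  fixes P :: "nat \<Rightarrow> ('a \<times> 'a) set"
  assumes "mono P" "\<And>k. partial_iso E (P k)"
  shows "partial_iso E (\<Union>k. P k)"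
  unfolding partial_iso_def
proof (intro allI impI)
  fix x y x' y' assume "(x, y) \<in> (\<Union>k. P k)" "(x', y') \<in> (\<Union>k. P k)"
  then obtain k m where "(x, y) \<in> P k" "(x', y') \<in> P m" by blast
  moreover have "P k \<subseteq> P (max k m)"
    by (rule monoD[OF assms(1)]) simp
  moreover have "P m \<subseteq> P (max k m)"
    by (rule monoD[OF assms(1)]) simp
  ultimately have "(x, y) \<in> P (max k m)" "(x', y') \<in> P (max k m)"
    by blast+
  then show "(x = x' \<longleftrightarrow> y = y') \<and> (E x x' \<longleftrightarrow> E y y')"
    using assms(2) unfolding partial_iso_def by blast
qed

lemma partial_iso_total_automorphism:
  assumes Q: "partial_iso E Q" "Q \<subseteq> V \<times> V" and total: "V \<subseteq> Domain Q" "V \<subseteq> Range Q"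
  obtains g where "bij_betw g V V" "emb_on E V g" "\<And>x y. (x, y) \<in> Q \<Longrightarrow> g x = y"
proof
  define g where "g x = (THE y. (x, y) \<in> Q)" for x
  show g_Q: "g x = y" if "(x, y) \<in> Q" for x y
    unfolding g_def by (rule the_equality) (use that Q(1) in \<open>auto simp: partial_iso_def\<close>)
  have in_Q: "(x, g x) \<in> Q" if "x \<in> V" for x
    using total(1) that g_Q by blast
  show "emb_on E V g"
    unfolding emb_on_def inj_on_def using in_Q Q(1) by (simp add: partial_iso_def) metis
  moreover have "g ` V = V"
    using in_Q Q(2) total(2) g_Q by force
  ultimately show "bij_betw g V V"
    by (simp add: bij_betw_def emb_on_def)
qed

lemma partial_iso_back_and_forth:
  assumes forth: "\<And>P v. partial_iso E P \<Longrightarrow> finite P \<Longrightarrow> P \<subseteq> V \<times> V \<Longrightarrow> v \<in> V \<Longrightarrow>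
      \<exists>w\<in>V. partial_iso E (insert (v, w) P)"
    and P: "partial_iso E P" "finite P" "P \<subseteq> V \<times> V" and v: "v \<in> V"
  shows "\<exists>P'. partial_iso E P' \<and> finite P' \<and> P' \<subseteq> V \<times> V \<and> P \<subseteq> P' \<and> v \<in> Domain P' \<and> v \<in> Range P'"
proof -
  obtain w where w: "w \<in> V" "partial_iso E (insert (v, w) P)"
    using forth[OF P v] by blast
  let ?P1 = "insert (v, w) P"
  have "partial_iso E (?P1\<inverse>)" "finite (?P1\<inverse>)" "?P1\<inverse> \<subseteq> V \<times> V"
    using partial_iso_converse[OF w(2)] P(2,3) w(1) v by auto
  then obtain u where u: "u \<in> V" "partial_iso E (insert (v, u) (?P1\<inverse>))"
    using forth v by blast
  have "(insert (v, u) (?P1\<inverse>))\<inverse> = insert (u, v) ?P1"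
    by auto
  then have "partial_iso E (insert (u, v) ?P1)"
    using partial_iso_converse[OF u(2)] by simp
  then show ?thesis
    using P(2,3) u(1) w(1) v by (intro exI[of _ "insert (u, v) ?P1"]) auto
qed

lemma countable_back_and_forth:
  assumes "countable V"
    and forth: "\<And>P v. partial_iso E P \<Longrightarrow> finite P \<Longrightarrow> P \<subseteq> V \<times> V \<Longrightarrow> v \<in> V \<Longrightarrow>
      \<exists>w\<in>V. partial_iso E (insert (v, w) P)"
    and P0: "partial_iso E P0" "finite P0" "P0 \<subseteq> V \<times> V"
  obtains g where "bij_betw g V V" "emb_on E V g" "\<And>x y. (x, y) \<in> P0 \<Longrightarrow> g x = y"
proof (cases "V = {}")
  case True
  with P0(3) show ?thesis
    using that[of id] by (simp add: emb_on_def)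
next
  case False
  define e where "e = from_nat_into V"
  have e: "e k \<in> V" for k
    using False by (simp add: e_def from_nat_into)
  have V_e: "V = range e"
    using False assms(1) by (simp add: e_def range_from_nat_into)
  define good where "good P \<longleftrightarrow> partial_iso E P \<and> finite P \<and> P \<subseteq> V \<times> V" for P
  define step where
    "step P v = (SOME P'. good P' \<and> P \<subseteq> P' \<and> v \<in> Domain P' \<and> v \<in> Range P')" for P v
  have step: "good (step P v) \<and> P \<subseteq> step P v \<and> v \<in> Domain (step P v) \<and> v \<in> Range (step P v)"
    if "good P" "v \<in> V" for P v
    unfolding step_def
    by (rule someI_ex) (use partial_iso_back_and_forth[OF forth] that in \<open>simp add: good_def\<close>)
  define chain where "chain = rec_nat P0 (\<lambda>k P. step P (e k))"
  have chain_good: "good (chain k)" for k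
    by (induction k) (use P0 step e in \<open>simp_all add: chain_def good_def\<close>)
  have chain_Suc: "chain k \<subseteq> chain (Suc k) \<and> e k \<in> Domain (chain (Suc k)) \<and> e k \<in> Range (chain (Suc k))" for k
    using step[OF chain_good e] by (simp add: chain_def)
  define Q where "Q = (\<Union>k. chain k)"
  have Q_iso: "partial_iso E Q"
    unfolding Q_def
    by (rule partial_iso_UN_mono) (use chain_Suc chain_good in \<open>auto simp: mono_iff_le_Suc good_def\<close>)
  have Q_sub: "Q \<subseteq> V \<times> V"
    using chain_good by (auto simp: Q_def good_def)
  have "e k \<in> Domain Q \<and> e k \<in> Range Q" for k
    using chain_Suc[of k] unfolding Q_def by blast
  then have Q_total: "V \<subseteq> Domain Q" "V \<subseteq> Range Q"
    unfolding V_e by auto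
  obtain g where g: "bij_betw g V V" "emb_on E V g" "\<And>x y. (x, y) \<in> Q \<Longrightarrow> g x = y"
    using partial_iso_total_automorphism[OF Q_iso Q_sub Q_total] by blast
  have "chain 0 = P0"
    by (simp add: chain_def)
  then have "P0 \<subseteq> Q"
    unfolding Q_def by blast
  with g show ?thesis
    by (intro that) auto
qed

lemma graph_sym: "graph V E \<Longrightarrow> E x y \<Longrightarrow> E y x"
  unfolding graph_def by blast

lemma graph_irrefl: "graph V E \<Longrightarrow> \<not> E x x"
  unfolding graph_def by blast

lemma K_freeD: "K_free k E V \<Longrightarrow> C \<subseteq> V \<Longrightarrow> finite C \<Longrightarrow> is_clique E C \<Longrightarrow> card C \<noteq> k"
  unfolding K_free_def by blast

lemma K_free_if_card_less: "finite A \<Longrightarrow> card A < k \<Longrightarrow> K_free k E A"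
  unfolding K_free_def by (meson card_mono leD order.strict_trans1 rev_finite_subset)

lemma
  assumes "is_Henson n V E"
  shows Henson_graph: "graph V E"
    and Henson_countable: "countable V"
    and Henson_K_free: "K_free n E V"
    and Henson_extension: "\<lbrakk>finite A; finite B; A \<subseteq> V; B \<subseteq> V; A \<inter> B = {}; K_free (n - 1) E A\<rbrakk>
      \<Longrightarrow> \<exists>v\<in>V. v \<notin> A \<and> v \<notin> B \<and> (\<forall>a\<in>A. E v a) \<and> (\<forall>b\<in>B. \<not> E v b)"
  using assms unfolding is_Henson_def by simp_all

lemma Henson_pos: "is_Henson n V E \<Longrightarrow> 0 < n"
  using Henson_K_free[of n V E] unfolding K_free_def is_clique_def
  by (metis card.empty empty_iff empty_subsetI finite.emptyI gr0I)

lemma partial_iso_neighbour_image_K_free: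
  assumes "graph V E" "K_free n E V" "0 < n" "partial_iso E P" "P \<subseteq> V \<times> V"
    and v: "v \<in> V" "v \<notin> Domain P"
  shows "K_free (n - 1) E {y. \<exists>x. (x, y) \<in> P \<and> E v x}"
  unfolding K_free_def
proof
  assume "\<exists>C\<subseteq>{y. \<exists>x. (x, y) \<in> P \<and> E v x}. finite C \<and> card C = n - 1 \<and> is_clique E C"
  then obtain C where C: "C \<subseteq> {y. \<exists>x. (x, y) \<in> P \<and> E v x}" "finite C" "card C = n - 1" "is_clique E C"
    by blast
  then have "\<forall>y\<in>C. \<exists>x. (x, y) \<in> P \<and> E v x"
    by blast
  then obtain h where h: "\<forall>y\<in>C. (h y, y) \<in> P \<and> E v (h y)"
    by metis
  have "inj_on h C"
    using h assms(4) unfolding inj_on_def partial_iso_def by blast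
  moreover have "v \<notin> h ` C"
    using h v(2) by blast
  ultimately have "card (insert v (h ` C)) = n"
    using C(2,3) assms(3) by (simp add: card_image)
  moreover have "is_clique E (insert v (h ` C))"
  proof -
    have "is_clique E (h ` C)"
      using C(4) h assms(4) unfolding is_clique_def partial_iso_def by blast
    then show ?thesis
      using h assms(1) unfolding is_clique_def graph_def by blast
  qed
  moreover have "insert v (h ` C) \<subseteq> V"
    using h v(1) assms(5) by blast
  ultimately show False
    using K_freeD[OF assms(2)] C(2) by blast
qed

lemma Henson_forth:
  assumes H: "is_Henson n V E" and P: "partial_iso E P" "finite P" "P \<subseteq> V \<times> V" and v: "v \<in> V"
  shows "\<exists>w\<in>V. partial_iso E (insert (v, w) P)"
proof (cases "v \<in> Domain P")
  case True
  then obtain w where "(v, w) \<in> P"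
    by blast
  moreover from this have "w \<in> V"
    using P(3) by blast
  ultimately show ?thesis
    using P(1) by (metis insert_absorb)
next
  case False
  define A where "A = {y. \<exists>x. (x, y) \<in> P \<and> E v x}"
  define B where "B = {y. \<exists>x. (x, y) \<in> P \<and> \<not> E v x}"
  have "A \<subseteq> Range P" "B \<subseteq> Range P"
    unfolding A_def B_def by blast+
  then have "finite A" "finite B" "A \<subseteq> V" "B \<subseteq> V"
    using P(2,3) finite_Range finite_subset by (blast intro: rev_finite_subset)+
  moreover have "A \<inter> B = {}"
    using P(1) unfolding A_def B_def partial_iso_def by blast
  moreover have "K_free (n - 1) E A"
    unfolding A_def using Henson_graph[OF H] Henson_K_free[OF H] Henson_pos[OF H] P(1,3) v False
    by (rule partial_iso_neighbour_image_K_free)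
  ultimately obtain w where w: "w \<in> V" "w \<notin> A" "w \<notin> B" "\<forall>a\<in>A. E w a" "\<forall>b\<in>B. \<not> E w b"
    using Henson_extension[OF H, of A B] by blast
  have "partial_iso E (insert (v, w) P)"
  proof (rule partial_iso_insert[OF Henson_graph[OF H] P(1) False])
    show "w \<notin> Range P"
      using w(2,3) unfolding A_def B_def by blast
    show "E v x \<longleftrightarrow> E w y" if "(x, y) \<in> P" for x y
      using w(4,5) that unfolding A_def B_def by blast
  qed
  with w(1) show ?thesis
    by blast
qed

lemma Henson_automorphism_extension:
  assumes H: "is_Henson n V E" and A: "finite A" "A \<subseteq> V" "f ` A \<subseteq> V" "emb_on E A f"
  obtains g where "bij_betw g V V" "emb_on E V g" "\<forall>x\<in>A. g x = f x"
proof -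
  let ?P0 = "(\<lambda>x. (x, f x)) ` A"
  have "partial_iso E ?P0" "finite ?P0" "?P0 \<subseteq> V \<times> V"
    using partial_iso_graph_of_emb[OF A(4)] A(1-3) by auto
  then obtain g where "bij_betw g V V" "emb_on E V g" "\<And>x y. (x, y) \<in> ?P0 \<Longrightarrow> g x = y"
    using countable_back_and_forth[OF Henson_countable[OF H] Henson_forth[OF H]] by blast
  then show ?thesis
    using that by blast
qed

lemma Ymorph_if_automorphism:
  assumes "bij_betw g V V" "emb_on E V g"
  shows "Ymorph Y V E g"
  using assms by (cases Y) (auto simp: bij_betw_def emb_on_def hom_on_def)

lemma Ymorph_imp_endomorphism:
  assumes "Ymorph Y V E g"
  shows "g ` V \<subseteq> V" "hom_on E V g"
  using assms by (cases Y; auto simp: bij_betw_def emb_on_def hom_on_def)+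

lemma Henson_IY_homogeneous:
  assumes "is_Henson n V E"
  shows "XY_homogeneous XI Y V E"
  unfolding XY_homogeneous_def
proof (intro allI impI)
  fix A f
  assume "finite A \<and> A \<subseteq> V \<and> f ` A \<subseteq> V \<and> Xmorph XI E A f"
  then obtain g where "bij_betw g V V" "emb_on E V g" "\<forall>x\<in>A. g x = f x"
    using Henson_automorphism_extension[OF assms, of A f] by auto
  then show "\<exists>g. Ymorph Y V E g \<and> (\<forall>x\<in>A. g x = f x)"
    using Ymorph_if_automorphism by blast
qed

lemma Henson_common_neighbour_clique:
  assumes H: "is_Henson n V E" and ab: "a \<in> V" "b \<in> V" "\<not> E a b" and "k \<le> n - 2"
  shows "\<exists>C. finite C \<and> card C = k \<and> C \<subseteq> V \<and> is_clique E C \<and> (\<forall>c\<in>C. E c a \<and> E c b)"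
  using \<open>k \<le> n - 2\<close>
proof (induction k)
  case 0
  show ?case
    by (intro exI[of _ "{}"]) (simp add: is_clique_def)
next
  case (Suc k)
  then obtain C where C: "finite C" "card C = k" "C \<subseteq> V" "is_clique E C" "\<forall>c\<in>C. E c a \<and> E c b"
    by auto
  define A where "A = insert a (insert b C)"
  have "K_free (n - 1) E A"
    unfolding K_free_def
  proof
    assume "\<exists>D\<subseteq>A. finite D \<and> card D = n - 1 \<and> is_clique E D"
    then obtain D where D: "D \<subseteq> A" "finite D" "card D = n - 1" "is_clique E D"
      by blast
    have "D \<subseteq> insert a C \<or> D \<subseteq> insert b C"
      using D(1,4) ab(3) unfolding A_def is_clique_def by blast
    moreover have "card (insert a C) \<le> Suc k" "card (insert b C) \<le> Suc k"
      using C(1,2) by (simp_all add: card_insert_if)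
    ultimately have "card D \<le> Suc k"
      using C(1) by (meson card_mono finite_insert order_trans)
    with D(3) Suc.prems show False
      by simp
  qed
  moreover have "finite A" "A \<subseteq> V"
    using C(1,3) ab(1,2) by (simp_all add: A_def)
  ultimately obtain v where v: "v \<in> V" "v \<notin> A" "\<forall>x\<in>A. E v x"
    using Henson_extension[OF H, of A "{}"] by auto
  have "is_clique E (insert v C)"
    using C(4) v(3) Henson_graph[OF H] unfolding is_clique_def graph_def A_def by blast
  moreover have "card (insert v C) = Suc k"
    using C(1,2) v(2) by (simp add: A_def)
  ultimately show ?case
    using C v unfolding A_def by (intro exI[of _ "insert v C"]) auto
qed

lemma hom_on_image_clique:
  assumes "graph V E" "hom_on E V g" "S \<subseteq> V" "E (g a) (g b)"
    and almost_clique: "\<forall>x\<in>S. \<forall>y\<in>S. x \<noteq> y \<longrightarrow> {x, y} \<noteq> {a, b} \<longrightarrow> E x y"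
  shows "is_clique E (g ` S)" "inj_on g S"
proof -
  have adj: "E (g x) (g y)" if "x \<in> S" "y \<in> S" "x \<noteq> y" for x y
  proof (cases "{x, y} = {a, b}")
    case True
    then have "x = a \<and> y = b \<or> x = b \<and> y = a"
      by (metis doubleton_eq_iff)
    then show ?thesis
      using assms(4) graph_sym[OF assms(1)] by blast
  next
    case False
    then show ?thesis
      using that almost_clique assms(2,3) unfolding hom_on_def by blast
  qed
  then show "is_clique E (g ` S)"
    unfolding is_clique_def by blast
  show "inj_on g S"
    using adj graph_irrefl[OF assms(1)] by (metis inj_onI)
qed

lemma Henson_endomorphism_preserves_non_edges:
  assumes H: "is_Henson n V E" and g: "g ` V \<subseteq> V" "hom_on E V g"
    and ab: "a \<in> V" "b \<in> V" "a \<noteq> b" "\<not> E a b"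
  shows "\<not> E (g a) (g b)"
proof
  assume g_ab: "E (g a) (g b)"
  note graph = Henson_graph[OF H]
  obtain C where C: "finite C" "card C = n - 2" "C \<subseteq> V" "is_clique E C" "\<forall>c\<in>C. E c a \<and> E c b"
    using Henson_common_neighbour_clique[OF H ab(1,2,4) order_refl] by blast
  let ?S = "insert a (insert b C)"
  have S_V: "?S \<subseteq> V"
    using ab(1,2) C(3) by blast
  have "\<forall>x\<in>?S. \<forall>y\<in>?S. x \<noteq> y \<longrightarrow> {x, y} \<noteq> {a, b} \<longrightarrow> E x y"
    using C(4,5) graph_sym[OF graph] unfolding is_clique_def by blast
  then have g_S: "is_clique E (g ` ?S)" "inj_on g ?S"
    using hom_on_image_clique[OF graph g(2) S_V g_ab] by auto
  have "{a} \<subseteq> V" "is_clique E {a}"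
    using ab(1) by (simp_all add: is_clique_def)
  then have "n \<noteq> 1"
    using K_freeD[OF Henson_K_free[OF H], of "{a}"] by auto
  moreover have "a \<notin> C" "b \<notin> C"
    using C(5) graph_irrefl[OF graph] by blast+
  ultimately have "card ?S = n"
    using C(1,2) ab(3) Henson_pos[OF H] by simp
  then have "card (g ` ?S) = n"
    using card_image[OF g_S(2)] by simp
  moreover have "g ` ?S \<subseteq> V"
    using g(1) S_V by blast
  ultimately show False
    using K_freeD[OF Henson_K_free[OF H] _ _ g_S(1)] C(1) by blast
qed

lemma Henson_not_XY_homogeneous:
  assumes H: "is_Henson n V E" and "3 \<le> n" and X: "X \<in> {XH, XM}"
  shows "\<not> XY_homogeneous X Y V E"
proof
  assume hom: "XY_homogeneous X Y V E"
  note sym = graph_sym[OF Henson_graph[OF H]] and irrefl = graph_irrefl[OF Henson_graph[OF H]]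
  have small_K_free: "K_free (n - 1) E {}" "K_free (n - 1) E {x}" for x
    using \<open>3 \<le> n\<close> by (simp_all add: K_free_if_card_less)
  obtain a where a: "a \<in> V"
    using Henson_extension[OF H, of "{}" "{}"] small_K_free(1) by auto
  obtain b where b: "b \<in> V" "b \<noteq> a" "\<not> E a b"
    using Henson_extension[OF H, of "{}" "{a}"] small_K_free(1) a sym by auto
  obtain d where d: "d \<in> V" "E a d"
    using Henson_extension[OF H, of "{a}" "{}"] small_K_free(2) a sym by auto
  define f where "f x = (if x = b then d else x)" for x
  have "hom_on E {a, b} f" "inj_on f {a, b}"
    using b(2,3) d(2) irrefl sym by (auto simp: f_def hom_on_def)
  with X a b(1) d(1) have f_Xmorph: "finite {a, b} \<and> {a, b} \<subseteq> V \<and> f ` {a, b} \<subseteq> V \<and> Xmorph X E {a, b} f"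
    by (auto simp: f_def)
  obtain g where g: "Ymorph Y V E g" "\<forall>x\<in>{a, b}. g x = f x"
    using hom[unfolded XY_homogeneous_def, rule_format, OF f_Xmorph] by blast
  then have "E (g a) (g b)"
    using b(2) d(2) by (simp add: f_def)
  with Henson_endomorphism_preserves_non_edges[OF H Ymorph_imp_endomorphism[OF g(1)] a b(1)] b(2,3)
  show False
    by blast
qed

theorem mainTheorem9:
  fixes n :: nat and V :: "'a set" and E :: "'a \<Rightarrow> 'a \<Rightarrow> bool"
  assumes "n \<ge> 3" and "is_Henson n V E"
  shows "(\<forall>Y. XY_homogeneous XI Y V E) \<and>
         (\<forall>X\<in>{XH, XM}. \<forall>Y. \<not> XY_homogeneous X Y V E)"
  by (simp add: Henson_IY_homogeneous[OF assms(2)] Henson_not_XY_homogeneous[OF assms(2,1)])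

end
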